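(* Let $r\in\mathbb R\setminus\{0\}$, let $\varphi_0,\varphi_1,\varphi$ be positive non-degenerate quasi-concave functions on $(0,\infty)$, let $\{\widetilde t_i\}$ be a discretizing sequence for $\varphi(\varphi_0,\varphi_1)$, $\{\tau_k\}$ a discretizing sequence for $\varphi_0$ and $\{z_k\}$ a discretizing sequence for $\varphi_1$. Then there is a constant $C$ independent of $k$ such that for all $k\in\mathbb Z$ $$\sum_{i:\ \tau_k\le\widetilde t_i\le\tau_{k+1}}\Big(\frac{\varphi_1(\widetilde t_i)}{\varphi_0(\widetilde t_i)}\Big)^r\le C\sup_{i:\ \tau_k\le\widetilde t_i\le\tau_{k+1}}\Big(\frac{\varphi_1(\widetilde t_i)}{\varphi_0(\widetilde t_i)}\Big)^r,$$ $$\sum_{i:\ z_k\le\widetilde t_i\le z_{k+1}}\Big(\frac{\varphi_1(\widetilde t_i)}{\varphi_0(\widetilde t_i)}\Big)^r\le C\sup_{i:\ z_k\le\widetilde t_i\le z_{k+1}}\Big(\frac{\varphi_1(\widetilde t_i)}{\varphi_0(\widetilde t_i)}\Big)^r.$$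
   Context: A function $\psi:(0,\infty)\to(0,\infty)$ is non-degenerate quasi-concave if it is non-decreasing, $\psi(t)/t$ is non-increasing, and $\lim_{t\to0+}\psi(t)=\lim_{t\to\infty}\psi(t)/t=\lim_{t\to0+}t/\psi(t)=\lim_{t\to\infty}1/\psi(t)=0$. $\varphi(\varphi_0,\varphi_1)(t)=\varphi_0(t)\varphi(\varphi_1(t)/\varphi_0(t))$. A positive sequence is strongly increasing if $\inf_k a_{k+1}/a_k\ge2$, strongly decreasing if $\sup_k a_{k+1}/a_k\le1/2$. A strongly increasing $\{s_k\}_{k\in\mathbb Z}$ is a discretizing sequence for $\psi$ if $\{\psi(s_k)\}$ is strongly increasing, $\{\psi(s_k)/s_k\}$ is strongly decreasing, and $\mathbb Z=\mathbb Z_1\sqcup\mathbb Z_2$ with $\psi(s_{k+1})\le2\psi(s_k)$ for $k\in\mathbb Z_1$ and $\psi(s_k)/s_k\le2\psi(s_{k+1})/s_{k+1}$ for $k\in\mathbb Z_2$. *)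

theory Defs
  imports Complex_Main
begin

definition nd_quasi_concave :: "(real \<Rightarrow> real) \<Rightarrow> bool" where
  "nd_quasi_concave \<psi> \<longleftrightarrow>
     (\<forall>t>0. \<psi> t > 0) \<and>
     (\<forall>s t. 0 < s \<and> s \<le> t \<longrightarrow> \<psi> s \<le> \<psi> t) \<and>
     (\<forall>s t. 0 < s \<and> s \<le> t \<longrightarrow> \<psi> t / t \<le> \<psi> s / s) \<and>
     (\<psi> \<longlongrightarrow> 0) (at_right 0) \<and>
     ((\<lambda>t. \<psi> t / t) \<longlongrightarrow> 0) at_top \<and>
     ((\<lambda>t. t / \<psi> t) \<longlongrightarrow> 0) (at_right 0) \<and>
     ((\<lambda>t. 1 / \<psi> t) \<longlongrightarrow> 0) at_top"

definition compose_qc :: "(real \<Rightarrow> real) \<Rightarrow> (real \<Rightarrow> real) \<Rightarrow> (real \<Rightarrow> real) \<Rightarrow> real \<Rightarrow> real" where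
  "compose_qc \<phi> \<phi>0 \<phi>1 t = \<phi>0 t * \<phi> (\<phi>1 t / \<phi>0 t)"

definition strongly_increasing :: "(int \<Rightarrow> real) \<Rightarrow> bool" where
  "strongly_increasing a \<longleftrightarrow> (\<forall>k. a k > 0) \<and> (\<forall>k. a (k + 1) \<ge> 2 * a k)"

definition strongly_decreasing :: "(int \<Rightarrow> real) \<Rightarrow> bool" where
  "strongly_decreasing a \<longleftrightarrow> (\<forall>k. a k > 0) \<and> (\<forall>k. a (k + 1) \<le> a k / 2)"

definition discretizing_seq :: "(real \<Rightarrow> real) \<Rightarrow> (int \<Rightarrow> real) \<Rightarrow> bool" where
  "discretizing_seq \<psi> s \<longleftrightarrow>
     strongly_increasing s \<and>
     strongly_increasing (\<lambda>k. \<psi> (s k)) \<and>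
     strongly_decreasing (\<lambda>k. \<psi> (s k) / s k) \<and>
     (\<exists>Z1 Z2. Z1 \<inter> Z2 = {} \<and> Z1 \<union> Z2 = UNIV \<and>
        (\<forall>k\<in>Z1. \<psi> (s (k + 1)) \<le> 2 * \<psi> (s k)) \<and>
        (\<forall>k\<in>Z2. \<psi> (s k) / s k \<le> 2 * (\<psi> (s (k + 1)) / s (k + 1))))"

end

theory Submission
  imports Defs
begin

text \<open>
  Write psi = phi(phi0, phi1) = phi0 * phi(G) with G = phi1 / phi0. On a block
  [tau k, tau (k + 1)] of a discretizing sequence for phi0, either phi0 or phi0(t) / t varies
  by at most a factor 2. Since psi(t i) grows and psi(t i) / t i decays geometrically, phi(G(t i))
  grows, resp. decays, geometrically along the block, and quasi-concavity of phi passes this on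
  to G(t i) itself. A geometric sequence G^r has sum at most a constant times its largest term.
  The blocks of z reduce to blocks of the first kind through phi(phi0, phi1) = phi~(phi1, phi0)
  with the quasi-concave dual phi~(s) = s * phi(1 / s), which replaces G by 1 / G and r by -r.
\<close>

definition quasi_concave :: "(real \<Rightarrow> real) \<Rightarrow> bool" where
  "quasi_concave \<psi> \<longleftrightarrow>
     (\<forall>t>0. \<psi> t > 0) \<and>
     (\<forall>s t. 0 < s \<and> s \<le> t \<longrightarrow> \<psi> s \<le> \<psi> t) \<and>
     (\<forall>s t. 0 < s \<and> s \<le> t \<longrightarrow> \<psi> t / t \<le> \<psi> s / s)"

lemma nd_quasi_concave_imp_quasi_concave: "nd_quasi_concave \<psi> \<Longrightarrow> quasi_concave \<psi>"
  unfolding nd_quasi_concave_def quasi_concave_def by blast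

lemma
  assumes "quasi_concave \<psi>"
  shows quasi_concave_pos: "0 < t \<Longrightarrow> 0 < \<psi> t"
    and quasi_concave_mono: "0 < s \<Longrightarrow> s \<le> t \<Longrightarrow> \<psi> s \<le> \<psi> t"
    and quasi_concave_ratio_antimono: "0 < s \<Longrightarrow> s \<le> t \<Longrightarrow> \<psi> t / t \<le> \<psi> s / s"
  using assms unfolding quasi_concave_def by blast+

lemma quasi_concave_arg_growth:
  assumes "quasi_concave \<psi>" "0 < x" "0 < y" "1 < c" "c * \<psi> y \<le> \<psi> x"
  shows "c * y \<le> x"
proof (rule ccontr)
  assume "\<not> c * y \<le> x"
  then have x_less: "x < c * y" by simp
  have "0 < \<psi> y" using quasi_concave_pos[OF assms(1,3)] .
  show False
  proof (cases "x \<le> y")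
    case True
    then have "\<psi> x \<le> \<psi> y" using quasi_concave_mono[OF assms(1,2)] by blast
    moreover have "\<psi> y < c * \<psi> y" using \<open>0 < \<psi> y\<close> assms(4) by simp
    ultimately show False using assms(5) by linarith
  next
    case False
    then have "\<psi> x / x \<le> \<psi> y / y" using quasi_concave_ratio_antimono[OF assms(1,3)] by simp
    then have "\<psi> x \<le> \<psi> y * (x / y)" using assms(2,3) by (simp add: field_simps)
    also have "\<dots> < \<psi> y * c" using x_less \<open>0 < \<psi> y\<close> assms(3) by (simp add: field_simps)
    finally show False using assms(5) by (simp add: mult.commute)
  qed
qed

definition qc_dual :: "(real \<Rightarrow> real) \<Rightarrow> real \<Rightarrow> real" where
  "qc_dual \<psi> s = s * \<psi> (1 / s)"

lemma quasi_concave_qc_dual: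
  assumes "quasi_concave \<psi>"
  shows "quasi_concave (qc_dual \<psi>)"
proof -
  have "0 < qc_dual \<psi> s" if "0 < s" for s
    using quasi_concave_pos[OF assms] that by (simp add: qc_dual_def)
  moreover have "qc_dual \<psi> s \<le> qc_dual \<psi> t" and "qc_dual \<psi> t / t \<le> qc_dual \<psi> s / s"
    if "0 < s" "s \<le> t" for s t
  proof -
    have "0 < 1 / t" "1 / t \<le> 1 / s" using that by (auto intro: frac_le)
    then have "\<psi> (1 / s) / (1 / s) \<le> \<psi> (1 / t) / (1 / t)" and "\<psi> (1 / t) \<le> \<psi> (1 / s)"
      using quasi_concave_ratio_antimono[OF assms] quasi_concave_mono[OF assms] by blast+
    then show "qc_dual \<psi> s \<le> qc_dual \<psi> t" and "qc_dual \<psi> t / t \<le> qc_dual \<psi> s / s"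
      using that by (simp_all add: qc_dual_def mult.commute)
  qed
  ultimately show ?thesis unfolding quasi_concave_def by blast
qed

lemma compose_qc_qc_dual:
  "0 < \<phi>0 x \<Longrightarrow> 0 < \<phi>1 x \<Longrightarrow> compose_qc (qc_dual \<phi>) \<phi>1 \<phi>0 x = compose_qc \<phi> \<phi>0 \<phi>1 x"
  by (simp add: compose_qc_def qc_dual_def)

lemma discretizing_seq_cong:
  assumes "\<forall>x>0. \<psi> x = \<psi>' x" "discretizing_seq \<psi> s"
  shows "discretizing_seq \<psi>' s"
proof -
  have "\<forall>k. 0 < s k" using assms(2) unfolding discretizing_seq_def strongly_increasing_def by blast
  then have "\<psi> (s k) = \<psi>' (s k)" for k using assms(1) by blast
  then show ?thesis using assms(2) unfolding discretizing_seq_def by simp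
qed

lemma strongly_increasing_pos: "strongly_increasing a \<Longrightarrow> 0 < a k"
  unfolding strongly_increasing_def by blast

lemma strongly_increasing_pow_le:
  assumes "strongly_increasing a" "i \<le> j"
  shows "2 ^ nat (j - i) * a i \<le> a j"
proof -
  have "2 ^ n * a i \<le> a (i + int n)" for n
  proof (induction n)
    case 0
    then show ?case by simp
  next
    case (Suc n)
    have "2 ^ Suc n * a i \<le> 2 * a (i + int n)" using Suc by simp
    also have "\<dots> \<le> a (i + int n + 1)" using assms(1) unfolding strongly_increasing_def by blast
    also have "\<dots> = a (i + int (Suc n))" by (rule arg_cong[where f = a]) simp
    finally show ?case .
  qed
  from this[of "nat (j - i)"] show ?thesis using assms(2) by simp
qed

lemma strongly_decreasing_reflect:
  assumes "strongly_decreasing a"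
  shows "strongly_increasing (\<lambda>k. a (- k))"
  unfolding strongly_increasing_def
proof (intro conjI allI)
  fix k :: int
  show "0 < a (- k)" using assms unfolding strongly_decreasing_def by blast
  have "a (- (k + 1) + 1) \<le> a (- (k + 1)) / 2" using assms unfolding strongly_decreasing_def by blast
  then show "2 * a (- k) \<le> a (- (k + 1))" by simp
qed

lemma finite_strongly_increasing_between:
  assumes "strongly_increasing a" "0 < B"
  shows "finite {i. B \<le> a i \<and> a i \<le> A}"
proof -
  have linear: "real (nat (j - i)) * a i \<le> a j" if "i \<le> j" for i j
  proof -
    have "real (nat (j - i)) \<le> 2 ^ nat (j - i)"
      using of_nat_less_two_power[of "nat (j - i)", where 'a = real] by linarith
    then have "real (nat (j - i)) * a i \<le> 2 ^ nat (j - i) * a i"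
      using mult_right_mono less_imp_le[OF strongly_increasing_pos[OF assms(1)]] by blast
    also have "\<dots> \<le> a j" using strongly_increasing_pow_le[OF assms(1) that] .
    finally show ?thesis .
  qed
  have "0 < a 0" by (rule strongly_increasing_pos[OF assms(1)])
  have "{i. B \<le> a i \<and> a i \<le> A} \<subseteq> {- \<lceil>a 0 / B\<rceil> .. \<lceil>A / a 0\<rceil>}"
  proof
    fix i assume "i \<in> {i. B \<le> a i \<and> a i \<le> A}"
    then have i: "B \<le> a i" "a i \<le> A" by auto
    have "0 < A" using assms(2) i by linarith
    then have "0 < a 0 / B" "0 < A / a 0" using \<open>0 < a 0\<close> assms(2) by simp_all
    then have "0 \<le> \<lceil>a 0 / B\<rceil>" "0 \<le> \<lceil>A / a 0\<rceil>" unfolding zero_le_ceiling by linarith+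
    show "i \<in> {- \<lceil>a 0 / B\<rceil> .. \<lceil>A / a 0\<rceil>}"
    proof (cases "0 \<le> i")
      case True
      have "real (nat i) * a 0 \<le> A" using linear[OF True] i(2) by simp
      then have "real_of_int i \<le> A / a 0" using True \<open>0 < a 0\<close> by (simp add: field_simps)
      then have "i \<le> \<lceil>A / a 0\<rceil>" by (simp add: le_ceiling_iff)
      moreover have "- \<lceil>a 0 / B\<rceil> \<le> i" using True \<open>0 \<le> \<lceil>a 0 / B\<rceil>\<close> by linarith
      ultimately show ?thesis by simp
    next
      case False
      have "real (nat (- i)) * B \<le> real (nat (- i)) * a i" using i(1) by (simp add: mult_left_mono)
      also have "\<dots> \<le> a 0" using linear[of i 0] False by simp
      finally have "- real_of_int i \<le> a 0 / B" using False assms(2) by (simp add: field_simps)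
      then have "- i \<le> \<lceil>a 0 / B\<rceil>" by (simp add: le_ceiling_iff)
      moreover have "i \<le> \<lceil>A / a 0\<rceil>" using False \<open>0 \<le> \<lceil>A / a 0\<rceil>\<close> by linarith
      ultimately show ?thesis by simp
    qed
  qed
  then show ?thesis by (rule finite_subset) simp
qed

text \<open>
  Consecutive indices are not compared: passing from phi(G) to G through a quasi-concave phi
  costs one factor of the ratio, which leaves nothing for neighbours.
\<close>

definition geom_increasing_on :: "int set \<Rightarrow> real \<Rightarrow> (int \<Rightarrow> real) \<Rightarrow> bool" where
  "geom_increasing_on S b g \<longleftrightarrow> (\<forall>i\<in>S. \<forall>j\<in>S. i + 2 \<le> j \<longrightarrow> b ^ (nat (j - i) - 1) * g i \<le> g j)"

definition geom_decreasing_on :: "int set \<Rightarrow> real \<Rightarrow> (int \<Rightarrow> real) \<Rightarrow> bool" where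
  "geom_decreasing_on S b g \<longleftrightarrow> (\<forall>i\<in>S. \<forall>j\<in>S. i + 2 \<le> j \<longrightarrow> b ^ (nat (j - i) - 1) * g j \<le> g i)"

lemma geom_decreasing_on_reflect:
  "geom_decreasing_on S b g \<longleftrightarrow> geom_increasing_on (uminus ` S) b (\<lambda>i. g (- i))"
proof -
  have "(- j + 2 \<le> - i) = (i + 2 \<le> j)" "nat (- i - - j) = nat (j - i)" for i j :: int
    by linarith simp
  then show ?thesis
    unfolding geom_decreasing_on_def geom_increasing_on_def Ball_image_comp comp_def by auto
qed

lemma geom_increasing_on_iff_inverse:
  assumes "\<forall>i\<in>S. 0 < g i"
  shows "geom_increasing_on S b g \<longleftrightarrow> geom_decreasing_on S b (\<lambda>i. inverse (g i))"
    and "geom_decreasing_on S b g \<longleftrightarrow> geom_increasing_on S b (\<lambda>i. inverse (g i))"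
proof -
  have "c * g i \<le> g j \<longleftrightarrow> c * inverse (g j) \<le> inverse (g i)" if "i \<in> S" "j \<in> S" for i j c
    using assms that by (simp add: field_simps)
  then show "geom_increasing_on S b g \<longleftrightarrow> geom_decreasing_on S b (\<lambda>i. inverse (g i))"
    and "geom_decreasing_on S b g \<longleftrightarrow> geom_increasing_on S b (\<lambda>i. inverse (g i))"
    unfolding geom_increasing_on_def geom_decreasing_on_def by blast+
qed

lemma power_powr_swap:
  fixes b r :: real
  assumes "0 < b"
  shows "(b ^ n) powr r = (b powr r) ^ n"
proof -
  have "(b ^ n) powr r = (b powr real n) powr r" using assms by (simp add: powr_realpow)
  also have "\<dots> = (b powr r) powr real n" by (rule powr_powr_swap)
  also have "\<dots> = (b powr r) ^ n" using assms by (simp add: powr_realpow)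
  finally show ?thesis .
qed

lemma geom_increasing_on_powr:
  assumes "geom_increasing_on S b g" "\<forall>i\<in>S. 0 < g i" "0 < b" "0 \<le> r"
  shows "geom_increasing_on S (b powr r) (\<lambda>i. g i powr r)"
  unfolding geom_increasing_on_def
proof (intro ballI impI)
  fix i j assume "i \<in> S" "j \<in> S" "i + 2 \<le> j"
  then have "b ^ (nat (j - i) - 1) * g i \<le> g j" using assms(1) unfolding geom_increasing_on_def by blast
  then have "(b ^ (nat (j - i) - 1) * g i) powr r \<le> g j powr r"
    using assms \<open>i \<in> S\<close> by (intro powr_mono2) auto
  then show "(b powr r) ^ (nat (j - i) - 1) * g i powr r \<le> g j powr r"
    using assms(3) by (simp add: powr_mult power_powr_swap)
qed

lemma geom_decreasing_on_powr:
  assumes "geom_decreasing_on S b g" "\<forall>i\<in>S. 0 < g i" "0 < b" "0 \<le> r"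
  shows "geom_decreasing_on S (b powr r) (\<lambda>i. g i powr r)"
  using assms geom_increasing_on_powr[of "uminus ` S" b "\<lambda>i. g (- i)" r]
  by (auto simp: geom_decreasing_on_reflect)

lemma sum_geometric_inj_le:
  fixes q :: real and d :: "'a \<Rightarrow> nat"
  assumes "finite S" "inj_on d S" "0 \<le> q" "q < 1"
  shows "(\<Sum>j\<in>S. q ^ d j) \<le> 1 / (1 - q)"
proof -
  have "(\<Sum>j\<in>S. q ^ d j) = (\<Sum>n\<in>d ` S. q ^ n)" by (simp add: sum.reindex[OF assms(2)])
  also have "\<dots> \<le> (\<Sum>n. q ^ n)"
    by (rule sum_le_suminf) (use assms in \<open>auto intro: summable_geometric\<close>)
  also have "\<dots> = 1 / (1 - q)" using assms by (intro suminf_geometric) simp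
  finally show ?thesis .
qed

lemma sum_le_Max_of_geom_increasing_on:
  assumes "finite S" "S \<noteq> {}" "\<forall>i\<in>S. 0 < f i" "1 < b" "geom_increasing_on S b f"
  shows "sum f S \<le> b\<^sup>2 / (b - 1) * Max (f ` S)"
proof -
  define n where "n = Max S"
  define M where "M = Max (f ` S)"
  define q where "q = 1 / b"
  have n: "n \<in> S" "\<forall>j\<in>S. j \<le> n" using assms(1,2) by (simp_all add: n_def)
  have le_M: "f j \<le> M" if "j \<in> S" for j using assms(1) that by (simp add: M_def)
  have "0 < M" using le_M[OF n(1)] assms(3) n(1) by force
  have q: "0 \<le> q" "q < 1" using assms(4) by (simp_all add: q_def)
  have decay: "f j \<le> M * b * q ^ nat (n - j)" if "j \<in> S" for j
  proof (cases "j + 2 \<le> n")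
    case True
    have "b ^ (nat (n - j) - 1) * f j \<le> M"
      using assms(5) that n le_M True unfolding geom_increasing_on_def by (meson order_trans)
    moreover have "b ^ nat (n - j) = b * b ^ (nat (n - j) - 1)"
      using True by (simp flip: power_Suc)
    ultimately show ?thesis using assms(4) by (simp add: q_def field_simps power_one_over)
  next
    case False
    with n(2) that have "nat (n - j) = 0 \<or> nat (n - j) = 1" by fastforce
    then have "1 \<le> b * q ^ nat (n - j)" using assms(4) by (auto simp: q_def)
    then show ?thesis using le_M[OF that] \<open>0 < M\<close>
      by (metis mult.assoc mult.right_neutral mult_left_mono order_trans less_imp_le)
  qed
  have inj: "inj_on (\<lambda>j. nat (n - j)) S"
  proof (rule inj_onI)
    fix x y assume "x \<in> S" "y \<in> S" "nat (n - x) = nat (n - y)"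
    moreover from this have "x \<le> n" "y \<le> n" using n(2) by auto
    ultimately show "x = y" by arith
  qed
  have "sum f S \<le> (\<Sum>j\<in>S. M * b * q ^ nat (n - j))" using decay by (rule sum_mono)
  also have "\<dots> = M * b * (\<Sum>j\<in>S. q ^ nat (n - j))" by (simp add: sum_distrib_left)
  also have "\<dots> \<le> M * b * (1 / (1 - q))"
    using sum_geometric_inj_le[OF assms(1) inj q] \<open>0 < M\<close> assms(4) by (intro mult_left_mono) auto
  also have "\<dots> = b\<^sup>2 / (b - 1) * M" using assms(4) by (simp add: q_def field_simps power2_eq_square)
  finally show ?thesis by (simp add: M_def)
qed

lemma sum_le_Max_of_geom_decreasing_on:
  assumes "finite S" "S \<noteq> {}" "\<forall>i\<in>S. 0 < f i" "1 < b" "geom_decreasing_on S b f"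
  shows "sum f S \<le> b\<^sup>2 / (b - 1) * Max (f ` S)"
proof -
  have "sum (\<lambda>i. f (- i)) (uminus ` S) \<le> b\<^sup>2 / (b - 1) * Max ((\<lambda>i. f (- i)) ` uminus ` S)"
    using assms by (intro sum_le_Max_of_geom_increasing_on) (auto simp: geom_decreasing_on_reflect)
  moreover have "sum (\<lambda>i. f (- i)) (uminus ` S) = sum f S" by (simp add: sum.reindex inj_on_def)
  moreover have "(\<lambda>i. f (- i)) ` uminus ` S = f ` S" by (simp add: image_image)
  ultimately show ?thesis by simp
qed

lemma sum_powr_le_Max_powr:
  fixes g :: "int \<Rightarrow> real"
  assumes "finite S" "\<forall>i\<in>S. 0 < g i" "r \<noteq> 0"
    and "geom_increasing_on S 2 g \<or> geom_decreasing_on S 2 g"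
  shows "(\<Sum>i\<in>S. g i powr r)
           \<le> (2 powr \<bar>r\<bar>)\<^sup>2 / (2 powr \<bar>r\<bar> - 1) * (if S = {} then 0 else Max ((\<lambda>i. g i powr r) ` S))"
proof (cases "S = {}")
  case False
  let ?b = "2 powr \<bar>r\<bar>" and ?f = "\<lambda>i. g i powr r"
  have "1 < ?b" using powr_less_mono[of 0 "\<bar>r\<bar>" 2] assms(3) by simp
  have "geom_increasing_on S ?b ?f \<or> geom_decreasing_on S ?b ?f"
  proof (cases "0 < r")
    case True
    then have "\<bar>r\<bar> = r" by simp
    then show ?thesis
      using assms(4) geom_increasing_on_powr[OF _ assms(2)] geom_decreasing_on_powr[OF _ assms(2)]
      by fastforce
  next
    case False
    have inv_pos: "\<forall>i\<in>S. 0 < inverse (g i)" using assms(2) by simp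
    have "?f = (\<lambda>i. inverse (g i) powr \<bar>r\<bar>)"
      using False by (simp add: inverse_powr powr_minus)
    then show ?thesis
      using assms(4) geom_increasing_on_iff_inverse[OF assms(2)]
        geom_increasing_on_powr[OF _ inv_pos] geom_decreasing_on_powr[OF _ inv_pos] by fastforce
  qed
  moreover have "\<forall>i\<in>S. 0 < ?f i" using assms(2) by fastforce
  ultimately show ?thesis
    using sum_le_Max_of_geom_increasing_on[OF assms(1) False _ \<open>1 < ?b\<close>]
      sum_le_Max_of_geom_decreasing_on[OF assms(1) False _ \<open>1 < ?b\<close>] False by auto
qed simp

lemma geom_increasing_on_of_comparable_weights:
  assumes "quasi_concave \<phi>" "\<forall>i. 0 < G i" "\<forall>i. 0 < w i"
    and "strongly_increasing (\<lambda>i. w i * \<phi> (G i))"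
    and "\<forall>i\<in>S. \<forall>j\<in>S. w j \<le> 2 * w i"
  shows "geom_increasing_on S 2 G"
  unfolding geom_increasing_on_def
proof (intro ballI impI)
  fix i j assume ij: "i \<in> S" "j \<in> S" "i + 2 \<le> j"
  define c :: real where "c = 2 ^ (nat (j - i) - 1)"
  have "1 < c" using ij(3) by (simp add: c_def)
  have "2 * c = 2 ^ nat (j - i)" using ij(3) by (simp add: c_def flip: power_Suc)
  then have "2 * c * (w i * \<phi> (G i)) \<le> w j * \<phi> (G j)"
    using strongly_increasing_pow_le[OF assms(4), of i j] ij(3) by simp
  also have "\<dots> \<le> 2 * w i * \<phi> (G j)"
    using assms(5) ij quasi_concave_pos[OF assms(1) assms(2)[rule_format, of j]]
    by (intro mult_right_mono) auto
  finally have "c * \<phi> (G i) \<le> \<phi> (G j)" using assms(3) by (simp add: mult.assoc mult.left_commute)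
  with \<open>1 < c\<close> show "c * G i \<le> G j"
    using quasi_concave_arg_growth[OF assms(1)] assms(2) by blast
qed

lemma geom_decreasing_on_of_comparable_weights:
  assumes "quasi_concave \<phi>" "\<forall>i. 0 < G i" "\<forall>i. 0 < w i"
    and "strongly_decreasing (\<lambda>i. w i * \<phi> (G i))"
    and "\<forall>i\<in>S. \<forall>j\<in>S. w j \<le> 2 * w i"
  shows "geom_decreasing_on S 2 G"
  unfolding geom_decreasing_on_reflect
  using assms strongly_decreasing_reflect[OF assms(4)]
  by (intro geom_increasing_on_of_comparable_weights[where w = "\<lambda>i. w (- i)"]) auto

lemma discretizing_seq_block_dichotomy:
  fixes \<rho> :: "real \<Rightarrow> real" and \<sigma> :: "int \<Rightarrow> real" and k :: int
  assumes "quasi_concave \<rho>" "discretizing_seq \<rho> \<sigma>"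
  defines "I \<equiv> {\<sigma> k..\<sigma> (k + 1)}"
  shows "(\<forall>x\<in>I. \<forall>y\<in>I. \<rho> y \<le> 2 * \<rho> x) \<or> (\<forall>x\<in>I. \<forall>y\<in>I. \<rho> y / y \<le> 2 * (\<rho> x / x))"
proof -
  obtain Z1 Z2 where Z: "Z1 \<union> Z2 = UNIV" "\<forall>k\<in>Z1. \<rho> (\<sigma> (k + 1)) \<le> 2 * \<rho> (\<sigma> k)"
      "\<forall>k\<in>Z2. \<rho> (\<sigma> k) / \<sigma> k \<le> 2 * (\<rho> (\<sigma> (k + 1)) / \<sigma> (k + 1))"
    using assms(2) unfolding discretizing_seq_def by blast
  have "0 < \<sigma> k" using assms(2) strongly_increasing_pos unfolding discretizing_seq_def by blast
  then have pos: "0 < x" if "x \<in> I" for x using that by (simp add: I_def)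
  consider "k \<in> Z1" | "k \<in> Z2" using Z(1) by blast
  then show ?thesis
  proof cases
    case 1
    have "\<rho> y \<le> 2 * \<rho> x" if "x \<in> I" "y \<in> I" for x y
    proof -
      have "\<rho> y \<le> \<rho> (\<sigma> (k + 1))" using quasi_concave_mono[OF assms(1) pos] that by (simp add: I_def)
      also have "\<dots> \<le> 2 * \<rho> (\<sigma> k)" using Z(2) 1 by blast
      also have "\<dots> \<le> 2 * \<rho> x" using quasi_concave_mono[OF assms(1) \<open>0 < \<sigma> k\<close>] that by (simp add: I_def)
      finally show ?thesis .
    qed
    then show ?thesis by blast
  next
    case 2
    have "\<rho> y / y \<le> 2 * (\<rho> x / x)" if "x \<in> I" "y \<in> I" for x y
    proof -
      have "\<rho> y / y \<le> \<rho> (\<sigma> k) / \<sigma> k"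
        using quasi_concave_ratio_antimono[OF assms(1) \<open>0 < \<sigma> k\<close>] that by (simp add: I_def)
      also have "\<dots> \<le> 2 * (\<rho> (\<sigma> (k + 1)) / \<sigma> (k + 1))" using Z(3) 2 by blast
      also have "\<dots> \<le> 2 * (\<rho> x / x)"
        using quasi_concave_ratio_antimono[OF assms(1) pos[OF that(1)], of "\<sigma> (k + 1)"] that(1)
        by (intro mult_left_mono) (simp_all add: I_def)
      finally show ?thesis .
    qed
    then show ?thesis by blast
  qed
qed

lemma geom_monotone_ratio_on_block:
  fixes \<phi> \<phi>0 \<phi>1 :: "real \<Rightarrow> real" and t \<sigma> :: "int \<Rightarrow> real" and k :: int
  assumes "quasi_concave \<phi>" "quasi_concave \<phi>0" "\<forall>x>0. 0 < \<phi>1 x"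
    and "discretizing_seq (compose_qc \<phi> \<phi>0 \<phi>1) t" "discretizing_seq \<phi>0 \<sigma>"
  defines "S \<equiv> {i. \<sigma> k \<le> t i \<and> t i \<le> \<sigma> (k + 1)}" and "G \<equiv> \<lambda>i. \<phi>1 (t i) / \<phi>0 (t i)"
  shows "geom_increasing_on S 2 G \<or> geom_decreasing_on S 2 G"
proof -
  have t_pos: "0 < t i" for i using assms(4) strongly_increasing_pos unfolding discretizing_seq_def by blast
  have \<phi>0_pos: "0 < \<phi>0 (t i)" for i using quasi_concave_pos[OF assms(2) t_pos] .
  have G_pos: "\<forall>i. 0 < G i" using \<phi>0_pos assms(3) t_pos by (simp add: G_def)
  have in_block: "t i \<in> {\<sigma> k..\<sigma> (k + 1)}" if "i \<in> S" for i using that by (simp add: S_def)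
  have \<psi>: "compose_qc \<phi> \<phi>0 \<phi>1 (t i) = \<phi>0 (t i) * \<phi> (G i)" for i by (simp add: compose_qc_def G_def)
  have \<psi>_inc: "strongly_increasing (\<lambda>i. \<phi>0 (t i) * \<phi> (G i))"
    and \<psi>_dec: "strongly_decreasing (\<lambda>i. \<phi>0 (t i) / t i * \<phi> (G i))"
    using assms(4) unfolding discretizing_seq_def \<psi> by simp_all
  from discretizing_seq_block_dichotomy[OF assms(2,5), of k] show ?thesis
  proof
    assume "\<forall>x\<in>{\<sigma> k..\<sigma> (k + 1)}. \<forall>y\<in>{\<sigma> k..\<sigma> (k + 1)}. \<phi>0 y \<le> 2 * \<phi>0 x"
    then have "\<forall>i\<in>S. \<forall>j\<in>S. \<phi>0 (t j) \<le> 2 * \<phi>0 (t i)" using in_block by blast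
    then have "geom_increasing_on S 2 G"
      using geom_increasing_on_of_comparable_weights[OF assms(1) G_pos _ \<psi>_inc] \<phi>0_pos by simp
    then show ?thesis ..
  next
    assume "\<forall>x\<in>{\<sigma> k..\<sigma> (k + 1)}. \<forall>y\<in>{\<sigma> k..\<sigma> (k + 1)}. \<phi>0 y / y \<le> 2 * (\<phi>0 x / x)"
    then have "\<forall>i\<in>S. \<forall>j\<in>S. \<phi>0 (t j) / t j \<le> 2 * (\<phi>0 (t i) / t i)" using in_block by blast
    then have "geom_decreasing_on S 2 G"
      using geom_decreasing_on_of_comparable_weights[OF assms(1) G_pos _ \<psi>_dec] \<phi>0_pos t_pos by simp
    then show ?thesis ..
  qed
qed

lemma sum_ratio_powr_le_Max_on_block:
  fixes \<phi> \<phi>0 \<phi>1 :: "real \<Rightarrow> real" and t \<sigma> :: "int \<Rightarrow> real" and k :: int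
  assumes "r \<noteq> 0" "quasi_concave \<phi>" "quasi_concave \<phi>0" "\<forall>x>0. 0 < \<phi>1 x"
    and "discretizing_seq (compose_qc \<phi> \<phi>0 \<phi>1) t" "discretizing_seq \<phi>0 \<sigma>"
  defines "S \<equiv> {i. \<sigma> k \<le> t i \<and> t i \<le> \<sigma> (k + 1)}" and "f \<equiv> \<lambda>i. (\<phi>1 (t i) / \<phi>0 (t i)) powr r"
  shows "(\<Sum>i\<in>S. f i) \<le> (2 powr \<bar>r\<bar>)\<^sup>2 / (2 powr \<bar>r\<bar> - 1) * (if S = {} then 0 else Max (f ` S))"
proof -
  define G where "G = (\<lambda>i. \<phi>1 (t i) / \<phi>0 (t i))"
  have t_inc: "strongly_increasing t" using assms(5) unfolding discretizing_seq_def by blast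
  have "0 < \<sigma> k" using assms(6) strongly_increasing_pos unfolding discretizing_seq_def by blast
  then have "finite S" unfolding S_def by (rule finite_strongly_increasing_between[OF t_inc])
  moreover have "\<forall>i\<in>S. 0 < G i"
    using assms(4) quasi_concave_pos[OF assms(3)] strongly_increasing_pos[OF t_inc] by (simp add: G_def)
  moreover have "geom_increasing_on S 2 G \<or> geom_decreasing_on S 2 G"
    unfolding S_def G_def by (rule geom_monotone_ratio_on_block[OF assms(2-6)])
  moreover have "f = (\<lambda>i. G i powr r)" by (simp add: f_def G_def)
  ultimately show ?thesis by (simp only:) (rule sum_powr_le_Max_powr[OF _ _ assms(1)])
qed

theorem lemma3p7:
  fixes r :: real and \<phi>0 \<phi>1 \<phi> :: "real \<Rightarrow> real" and t \<tau> z :: "int \<Rightarrow> real"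
  assumes "r \<noteq> 0"
    and "nd_quasi_concave \<phi>0" and "nd_quasi_concave \<phi>1" and "nd_quasi_concave \<phi>"
    and "discretizing_seq (compose_qc \<phi> \<phi>0 \<phi>1) t"
    and "discretizing_seq \<phi>0 \<tau>"
    and "discretizing_seq \<phi>1 z"
  shows "\<exists>C. \<forall>k::int.
    (let S = {i. \<tau> k \<le> t i \<and> t i \<le> \<tau> (k + 1)};
         f = (\<lambda>i. (\<phi>1 (t i) / \<phi>0 (t i)) powr r)
     in (\<Sum>i\<in>S. f i) \<le> C * (if S = {} then 0 else Max (f ` S))) \<and>
    (let S = {i. z k \<le> t i \<and> t i \<le> z (k + 1)};
         f = (\<lambda>i. (\<phi>1 (t i) / \<phi>0 (t i)) powr r)
     in (\<Sum>i\<in>S. f i) \<le> C * (if S = {} then 0 else Max (f ` S)))"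
proof -
  have qc: "quasi_concave \<phi>0" "quasi_concave \<phi>1" "quasi_concave \<phi>"
    using assms(2-4) by (simp_all add: nd_quasi_concave_imp_quasi_concave)
  have pos: "\<forall>x>0. 0 < \<phi>0 x" "\<forall>x>0. 0 < \<phi>1 x" using qc(1,2) quasi_concave_pos by blast+
  have t_pos: "0 < t i" for i
    using assms(5) strongly_increasing_pos unfolding discretizing_seq_def by blast
  have dual_seq: "discretizing_seq (compose_qc (qc_dual \<phi>) \<phi>1 \<phi>0) t"
    using pos by (intro discretizing_seq_cong[OF _ assms(5)]) (simp add: compose_qc_qc_dual)
  have flip: "(\<lambda>i. (\<phi>0 (t i) / \<phi>1 (t i)) powr (- r)) = (\<lambda>i. (\<phi>1 (t i) / \<phi>0 (t i)) powr r)"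
    using pos t_pos by (simp add: powr_minus powr_divide)
  have "- r \<noteq> 0" using assms(1) by simp
  note \<tau>_blocks = sum_ratio_powr_le_Max_on_block[OF assms(1) qc(3,1) pos(2) assms(5,6)]
  note z_blocks = sum_ratio_powr_le_Max_on_block[OF \<open>- r \<noteq> 0\<close> quasi_concave_qc_dual[OF qc(3)] qc(2)
      pos(1) dual_seq assms(7), unfolded flip abs_minus_cancel]
  show ?thesis
    unfolding Let_def
    by (intro exI[of _ "(2 powr \<bar>r\<bar>)\<^sup>2 / (2 powr \<bar>r\<bar> - 1)"] allI conjI \<tau>_blocks z_blocks)
qed

end
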